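(* Let $\mathcal{A}$ be a MAD family and let $\mathcal{B}=\{s_n:n\in\omega\}$ be a block sequence such that there is no infinite $W\subseteq\omega$ with $\bigcup_{n\in W}s_n\in\mathcal{I}(\mathcal{A})$. Then there are an infinite $X\subseteq\omega$ and a countable $\mathcal{A}_0\subseteq\mathcal{A}$ such that $\mathcal{A}\setminus\mathcal{A}_0\subseteq\mathcal{J}(\mathcal{B}_X)$.
   Context: A MAD family is a maximal family of infinite subsets of $\omega$ with pairwise finite intersections; $\mathcal{I}(\mathcal{A})$ is the ideal generated by $\mathcal{A}$ and the finite sets. A block sequence is $\{s_n:n\in\omega\}$ with each $s_n$ a nonempty finite subset of $\omega$ and $\max s_n<\min s_{n+1}$. For such $\mathcal{B}=\{s_n\}$ and infinite $X\subseteq\omega$, $\mathcal{B}_X=\{s_n:n\in X\}$ (enumerated in increasing order of $n$), and for a block sequence $\{t_k\}$ the ideal $\mathcal{J}(\{t_k\})$ is the set of $A\subseteq\omega$ with $\lim_k |A\cap t_k|/|t_k|=0$. *)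

theory Defs
  imports "HOL-Analysis.Analysis" "HOL-Library.Countable_Set"
begin

definition almost_disjoint_family :: "nat set set \<Rightarrow> bool" where
  "almost_disjoint_family \<A> \<longleftrightarrow>
     (\<forall>A\<in>\<A>. infinite A) \<and> (\<forall>A\<in>\<A>. \<forall>B\<in>\<A>. A \<noteq> B \<longrightarrow> finite (A \<inter> B))"

definition MAD :: "nat set set \<Rightarrow> bool" where
  "MAD \<A> \<longleftrightarrow> almost_disjoint_family \<A> \<and>
     (\<forall>\<B>. almost_disjoint_family \<B> \<and> \<A> \<subseteq> \<B> \<longrightarrow> \<B> = \<A>)"

definition ideal_gen :: "nat set set \<Rightarrow> nat set set" where
  "ideal_gen \<A> = {Y. \<exists>F. finite F \<and> F \<subseteq> \<A> \<and> finite (Y - \<Union>F)}"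

definition block_sequence :: "(nat \<Rightarrow> nat set) \<Rightarrow> bool" where
  "block_sequence s \<longleftrightarrow>
     (\<forall>n. finite (s n) \<and> s n \<noteq> {}) \<and> (\<forall>n. Max (s n) < Min (s (Suc n)))"

definition subblocks :: "(nat \<Rightarrow> nat set) \<Rightarrow> nat set \<Rightarrow> (nat \<Rightarrow> nat set)" where
  "subblocks s X = (\<lambda>k. s (enumerate X k))"

definition density_ideal :: "(nat \<Rightarrow> nat set) \<Rightarrow> nat set set" where
  "density_ideal t = {A. (\<lambda>k. real (card (A \<inter> t k)) / real (card (t k))) \<longlonglongrightarrow> 0}"

end

theory Submission
  imports Defs
begin

text \<open>
  Fix m. Any m + 1 members of an almost disjoint family overlap pairwise only in a finite
  set, so apart from finitely many blocks they meet each block in disjoint pieces and cannot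
  all occupy an m-th of it. By induction on the size of such subfamilies, every infinite set
  of block indices has an infinite subset along which all but finitely many members of the
  family occupy an m-th of only finitely many blocks. Doing this for m = 1, 2, ... along a
  decreasing sequence and taking a pseudo-intersection X of that sequence, every member
  outside the countably many exceptions has density tending to 0 along the blocks indexed
  by X.
\<close>

lemma finite_intersections_imp_thin_subset:
  fixes W :: "'a \<Rightarrow> 'b set"
  assumes "\<And>F. F \<subseteq> S \<Longrightarrow> finite F \<Longrightarrow> card F = k \<Longrightarrow> finite (X \<inter> (\<Inter>A\<in>F. W A))"
    and "infinite X"
  shows "\<exists>X' F. X' \<subseteq> X \<and> infinite X' \<and> finite F \<and> F \<subseteq> S \<and> (\<forall>A\<in>S - F. finite (X' \<inter> W A))"
  using assms
proof (induction k arbitrary: X S)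
  case 0
  from "0.prems"(1)[of "{}"] have "finite X"
    by simp
  with "0.prems"(2) show ?case
    by blast
next
  case (Suc k)
  show ?case
  proof (cases "\<exists>A\<in>S. infinite (X \<inter> W A)")
    case False
    with Suc.prems(2) show ?thesis
      by (intro exI[of _ X] exI[of _ "{}"]) auto
  next
    case True
    then obtain A where A: "A \<in> S" "infinite (X \<inter> W A)" by blast
    have "\<exists>X' F. X' \<subseteq> X \<inter> W A \<and> infinite X' \<and> finite F \<and> F \<subseteq> S - {A} \<and>
        (\<forall>B\<in>S - {A} - F. finite (X' \<inter> W B))"
    proof (rule Suc.IH)
      fix F assume F: "F \<subseteq> S - {A}" "finite F" "card F = k"
      then have "finite (X \<inter> (\<Inter>B\<in>insert A F. W B))"
        using A(1) by (intro Suc.prems(1)) (auto simp: card_insert_if)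
      then show "finite (X \<inter> W A \<inter> (\<Inter>B\<in>F. W B))"
        by (simp add: Int_assoc)
    qed (fact A(2))
    then obtain X' F where
      "X' \<subseteq> X \<inter> W A" "infinite X'" "finite F" "F \<subseteq> S - {A}"
      "\<forall>B\<in>S - {A} - F. finite (X' \<inter> W B)"
      by blast
    with A(1) show ?thesis
      by (intro exI[of _ X'] exI[of _ "insert A F"]) auto
  qed
qed

lemma decreasing_fusion_sequence:
  fixes Q :: "nat \<Rightarrow> 'a set \<Rightarrow> bool" and Y\<^sub>0 :: "'a set"
  assumes shrink: "\<And>j Y. infinite Y \<Longrightarrow> \<exists>Y'\<subseteq>Y. infinite Y' \<and> Q j Y'"
    and "infinite Y\<^sub>0"
  shows "\<exists>Ys. decseq Ys \<and> (\<forall>j. infinite (Ys j) \<and> Q j (Ys j))"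
proof -
  have "\<forall>j Y. \<exists>Y'. infinite Y \<longrightarrow> Y' \<subseteq> Y \<and> infinite Y' \<and> Q j Y'"
    using shrink by blast
  then obtain g where g: "\<And>j Y. infinite Y \<Longrightarrow> g j Y \<subseteq> Y \<and> infinite (g j Y) \<and> Q j (g j Y)"
    by metis
  define Ys where "Ys = rec_nat (g 0 Y\<^sub>0) (\<lambda>j. g (Suc j))"
  have Ys_Suc: "Ys (Suc j) = g (Suc j) (Ys j)" for j
    by (simp add: Ys_def)
  have Ys: "infinite (Ys j) \<and> Q j (Ys j)" for j
    by (induction j) (simp_all add: Ys_def g assms(2))
  have "decseq Ys"
    using g Ys by (intro decseq_SucI) (simp add: Ys_Suc)
  with Ys show ?thesis by blast
qed

lemma decseq_infinite_pseudo_intersection: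
  fixes Ys :: "nat \<Rightarrow> nat set"
  assumes "decseq Ys" and "\<And>j. infinite (Ys j)"
  shows "\<exists>X. infinite X \<and> (\<forall>j. finite (X - Ys j))"
proof -
  obtain pick where pick: "\<And>j m. pick j m \<in> Ys j \<and> m < pick j m"
    using assms(2) unfolding infinite_nat_iff_unbounded by metis
  define x where "x = rec_nat (pick 0 0) (\<lambda>j. pick (Suc j))"
  have x_Suc: "x (Suc j) = pick (Suc j) (x j)" for j
    by (simp add: x_def)
  have x_in: "x j \<in> Ys j" for j
    by (cases j) (simp_all add: x_def pick)
  have "strict_mono x"
    by (simp add: strict_mono_Suc_iff x_Suc pick)
  then have "infinite (range x)"
    using finite_imageD infinite_UNIV_nat strict_mono_imp_inj_on by blast
  moreover have "finite (range x - Ys j)" for j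
  proof (rule finite_subset)
    show "range x - Ys j \<subseteq> x ` {..<j}"
    proof
      fix y assume "y \<in> range x - Ys j"
      then obtain i where "y = x i" and "x i \<notin> Ys j" by blast
      moreover have "x i \<in> Ys j" if "j \<le> i"
        using x_in[of i] decseqD[OF assms(1) that] by blast
      ultimately show "y \<in> x ` {..<j}" by force
    qed
  qed simp
  ultimately show ?thesis by blast
qed

lemma fusion_pseudo_intersection:
  fixes Q :: "nat \<Rightarrow> nat set \<Rightarrow> bool"
  assumes "\<And>j Y. infinite Y \<Longrightarrow> \<exists>Y'\<subseteq>Y. infinite Y' \<and> Q j Y'"
  shows "\<exists>X Ys. infinite X \<and> (\<forall>j. Q j (Ys j) \<and> finite (X - Ys j))"
proof -
  have "\<exists>Ys. decseq Ys \<and> (\<forall>j. infinite (Ys j) \<and> Q j (Ys j))"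
    using assms infinite_UNIV_nat by (rule decreasing_fusion_sequence)
  then obtain Ys where Ys: "decseq Ys" "\<And>j. infinite (Ys j)" "\<And>j. Q j (Ys j)"
    by blast
  obtain X where "infinite X" "\<And>j. finite (X - Ys j)"
    using decseq_infinite_pseudo_intersection[OF Ys(1,2)] by blast
  with Ys(3) show ?thesis
    by blast
qed

definition heavy_blocks :: "(nat \<Rightarrow> nat set) \<Rightarrow> nat \<Rightarrow> nat set \<Rightarrow> nat set" where
  "heavy_blocks s m A = {n. card (s n) \<le> m * card (A \<inter> s n)}"

lemma block_sequence_index_le_Min:
  assumes "block_sequence s"
  shows "n \<le> Min (s n)"
proof (induction n)
  case (Suc n)
  have "Min (s n) \<le> Max (s n)" and "Max (s n) < Min (s (Suc n))"
    using assms by (auto simp: block_sequence_def)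
  with Suc show ?case by linarith
qed simp

lemma block_sequence_finite_meeting:
  assumes "block_sequence s" and "finite P"
  shows "finite {n. s n \<inter> P \<noteq> {}}"
proof (rule finite_subset)
  show "{n. s n \<inter> P \<noteq> {}} \<subseteq> {..Max P}"
  proof
    fix n assume "n \<in> {n. s n \<inter> P \<noteq> {}}"
    then obtain x where "x \<in> s n" "x \<in> P" by blast
    then have "Min (s n) \<le> x" and "x \<le> Max P"
      using assms by (auto simp: block_sequence_def)
    then show "n \<in> {..Max P}"
      using block_sequence_index_le_Min[OF assms(1), of n] by simp
  qed
qed simp

lemma sum_card_Int_le_card:
  assumes "finite T" and "finite F"
    and "\<And>A B. A \<in> F \<Longrightarrow> B \<in> F \<Longrightarrow> A \<noteq> B \<Longrightarrow> A \<inter> B \<inter> T = {}"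
  shows "(\<Sum>A\<in>F. card (A \<inter> T)) \<le> card T"
proof -
  have "(\<Sum>A\<in>F. card (A \<inter> T)) = card (\<Union>A\<in>F. A \<inter> T)"
    using assms by (subst card_UN_disjoint) (auto simp: Int_ac)
  also have "\<dots> \<le> card T"
    using assms(1) by (intro card_mono) auto
  finally show ?thesis .
qed

lemma finite_Inter_heavy_blocks:
  assumes ad: "almost_disjoint_family \<A>" and bs: "block_sequence s"
    and F: "F \<subseteq> \<A>" "finite F" "card F = Suc m"
  shows "finite (\<Inter>A\<in>F. heavy_blocks s m A)"
proof (rule finite_subset)
  define P where "P = (\<Union>A\<in>F. \<Union>B\<in>F - {A}. A \<inter> B)"
  have "finite (A \<inter> B)" if "A \<in> F" "B \<in> F - {A}" for A B
    using ad F(1) that unfolding almost_disjoint_family_def by blast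
  then have "finite P"
    unfolding P_def by (intro finite_UN_I finite_Diff F(2))
  then show "finite {n. s n \<inter> P \<noteq> {}}"
    using bs by (rule block_sequence_finite_meeting[rotated])
  show "(\<Inter>A\<in>F. heavy_blocks s m A) \<subseteq> {n. s n \<inter> P \<noteq> {}}"
  proof (intro subsetI CollectI notI)
    fix n assume heavy: "n \<in> (\<Inter>A\<in>F. heavy_blocks s m A)" and "s n \<inter> P = {}"
    then have "A \<inter> B \<inter> s n = {}" if "A \<in> F" "B \<in> F" "A \<noteq> B" for A B
      using that unfolding P_def by blast
    then have parts: "(\<Sum>A\<in>F. card (A \<inter> s n)) \<le> card (s n)"
      using bs F(2) by (intro sum_card_Int_le_card) (auto simp: block_sequence_def)
    have "0 < card (s n)"
      using bs by (simp add: block_sequence_def card_gt_0_iff)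
    have "Suc m * card (s n) = (\<Sum>A\<in>F. card (s n))"
      using F(3) by simp
    also have "\<dots> \<le> (\<Sum>A\<in>F. m * card (A \<inter> s n))"
      using heavy by (intro sum_mono) (auto simp: heavy_blocks_def)
    also have "\<dots> = m * (\<Sum>A\<in>F. card (A \<inter> s n))"
      by (simp add: sum_distrib_left)
    also have "\<dots> \<le> m * card (s n)"
      using parts by simp
    finally show False
      using \<open>0 < card (s n)\<close> by simp
  qed
qed

lemma eventually_enumerate_notin:
  fixes X :: "nat set"
  assumes "infinite X" and "finite (X \<inter> H)"
  shows "\<forall>\<^sub>F k in sequentially. enumerate X k \<notin> H"
proof -
  have "enumerate X -` (X \<inter> H) = {k. enumerate X k \<in> H}"
    using enumerate_in_set[OF assms(1)] by auto
  moreover have "finite (enumerate X -` (X \<inter> H))"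
    using assms(2) strict_mono_enumerate[OF assms(1)]
    by (intro finite_vimageI) (auto intro: strict_mono_imp_inj_on)
  ultimately show ?thesis
    by (simp add: cofinite_eq_sequentially[symmetric] eventually_cofinite)
qed

lemma density_ideal_subblocksI:
  assumes X: "infinite X" and thin: "\<And>m. finite (X \<inter> heavy_blocks s (Suc m) A)"
  shows "A \<in> density_ideal (subblocks s X)"
proof -
  define d where "d k = real (card (A \<inter> s (enumerate X k))) / real (card (s (enumerate X k)))" for k
  have light: "\<forall>\<^sub>F k in sequentially. d k < inverse (real (Suc m))" for m
    using eventually_enumerate_notin[OF X thin]
  proof (rule eventually_mono)
    fix k
    let ?B = "s (enumerate X k)"
    assume "enumerate X k \<notin> heavy_blocks s (Suc m) A"
    then have "Suc m * card (A \<inter> ?B) < card ?B"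
      by (simp add: heavy_blocks_def not_le)
    then have "real (Suc m) * card (A \<inter> ?B) < card ?B" and "0 < real (card ?B)"
      by (metis of_nat_less_iff of_nat_mult, simp)
    then show "d k < inverse (real (Suc m))"
      unfolding d_def by (simp add: field_simps)
  qed
  have "d \<longlonglongrightarrow> 0"
  proof (rule LIMSEQ_I)
    fix r :: real assume "0 < r"
    then obtain m where m: "inverse (real (Suc m)) < r"
      using reals_Archimedean by blast
    have "\<forall>\<^sub>F k in sequentially. norm (d k - 0) < r"
      using light[of m]
    proof (rule eventually_mono)
      fix k assume "d k < inverse (real (Suc m))"
      moreover have "0 \<le> d k" by (simp add: d_def)
      ultimately show "norm (d k - 0) < r" using m by simp
    qed
    then show "\<exists>N. \<forall>k\<ge>N. norm (d k - 0) < r"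
      by (simp add: eventually_sequentially)
  qed
  then show ?thesis
    unfolding density_ideal_def subblocks_def d_def by simp
qed

lemma almost_disjoint_thin_subset:
  assumes "almost_disjoint_family \<A>" and "block_sequence s" and "infinite Y"
  shows "\<exists>Y'\<subseteq>Y. infinite Y' \<and> (\<exists>F. finite F \<and> F \<subseteq> \<A> \<and>
    (\<forall>A\<in>\<A> - F. finite (Y' \<inter> heavy_blocks s (Suc m) A)))"
proof -
  have "\<exists>Y' F. Y' \<subseteq> Y \<and> infinite Y' \<and> finite F \<and> F \<subseteq> \<A> \<and>
      (\<forall>A\<in>\<A> - F. finite (Y' \<inter> heavy_blocks s (Suc m) A))"
    using assms(3)
  proof (rule finite_intersections_imp_thin_subset[where k = "Suc (Suc m)", rotated])
    fix F assume "F \<subseteq> \<A>" "finite F" "card F = Suc (Suc m)"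
    then have "finite (\<Inter>A\<in>F. heavy_blocks s (Suc m) A)"
      by (rule finite_Inter_heavy_blocks[OF assms(1,2)])
    then show "finite (Y \<inter> (\<Inter>A\<in>F. heavy_blocks s (Suc m) A))"
      by simp
  qed
  then show ?thesis by blast
qed

theorem mainTheorem16:
  fixes \<A> :: "nat set set" and s :: "nat \<Rightarrow> nat set"
  assumes "MAD \<A>"
    and "block_sequence s"
    and "\<not> (\<exists>W. infinite W \<and> (\<Union>n\<in>W. s n) \<in> ideal_gen \<A>)"
  shows "\<exists>X \<A>\<^sub>0. infinite X \<and> countable \<A>\<^sub>0 \<and> \<A>\<^sub>0 \<subseteq> \<A> \<and>
           \<A> - \<A>\<^sub>0 \<subseteq> density_ideal (subblocks s X)"
proof -
  have ad: "almost_disjoint_family \<A>"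
    using assms(1) by (simp add: MAD_def)
  define exceptions where "exceptions j Y = {F. finite F \<and> F \<subseteq> \<A> \<and>
    (\<forall>A\<in>\<A> - F. finite (Y \<inter> heavy_blocks s (Suc j) A))}" for j Y
  have "\<exists>Y'\<subseteq>Y. infinite Y' \<and> exceptions j Y' \<noteq> {}" if "infinite Y" for j Y
    using almost_disjoint_thin_subset[OF ad assms(2) that, where m = j] by (auto simp: exceptions_def)
  then obtain X Ys where X: "infinite X" and Ys: "\<And>j. exceptions j (Ys j) \<noteq> {} \<and> finite (X - Ys j)"
    using fusion_pseudo_intersection[of "\<lambda>j Y. exceptions j Y \<noteq> {}"] by blast
  define F where "F j = (SOME F. F \<in> exceptions j (Ys j))" for j
  have F: "F j \<in> exceptions j (Ys j)" for j
    unfolding F_def using Ys[of j] by (simp add: some_in_eq)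
  have "A \<in> density_ideal (subblocks s X)" if "A \<in> \<A> - (\<Union>j. F j)" for A
  proof (rule density_ideal_subblocksI[OF X])
    fix j
    have "X \<inter> heavy_blocks s (Suc j) A \<subseteq> (X - Ys j) \<union> (Ys j \<inter> heavy_blocks s (Suc j) A)"
      by blast
    with Ys[of j] F[of j] that show "finite (X \<inter> heavy_blocks s (Suc j) A)"
      unfolding exceptions_def by (blast intro: finite_subset)
  qed
  moreover have "countable (\<Union>j. F j)" and "(\<Union>j. F j) \<subseteq> \<A>"
    using F by (auto simp: exceptions_def countable_finite)
  ultimately show ?thesis
    using X by (intro exI[of _ X] exI[of _ "\<Union>j. F j"]) auto
qed

end
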